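(* Let $Q\subset\mathbb{R}^2$ be a compact convex polygon, centrally symmetric about the origin with nonempty interior, $L=\partial Q$, and consider the CC metric $d_{CC}$ on $H(\mathbb{R})$ induced by $\|\cdot\|_L$. Fix $(x,y)\in\mathbb{R}^2$. Then the function $t\mapsto d_{CC}((x,y,t),{\sf 0})$ on $[0,\infty)$ is continuous, and there is $T(x,y)\ge0$ such that it is constant on $[0,T(x,y)]$ and strictly increasing on $[T(x,y),\infty)$.
   Context: Exponential coordinates on $H(\mathbb{R})$: $(x,y,z)(x',y',z')=(x+x',y+y',z+z'+\tfrac12(xy'-yx'))$, ${\sf 0}=(0,0,0)$. $\|\cdot\|_L$ is the norm with unit ball $Q$; $d_{CC}({\sf p},{\sf q})$ is the infimum over admissible curves ($\gamma_3'=\tfrac12(\gamma_1\gamma_2'-\gamma_2\gamma_1')$) from ${\sf p}$ to ${\sf q}$ of the $\|\cdot\|_L$-length of their projection to the $(x,y)$-plane. *)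

theory Defs
  imports "HOL-Analysis.Analysis"
begin

text \<open>Points of the Heisenberg group in exponential coordinates: triples (x,y,z).\<close>

definition normL :: "(real \<times> real) set \<Rightarrow> real \<times> real \<Rightarrow> real" where
  "normL Q v = Inf {r. 0 < r \<and> v \<in> (\<lambda>q. r *\<^sub>R q) ` Q}"

definition proj_xy :: "real \<times> real \<times> real \<Rightarrow> real \<times> real" where
  "proj_xy p = (fst p, fst (snd p))"

definition admissible :: "(real \<Rightarrow> real \<times> real \<times> real) \<Rightarrow> bool" where
  "admissible \<gamma> \<longleftrightarrow>
     (\<exists>B. \<forall>s\<in>{0..1}. \<forall>t\<in>{0..1}. norm (\<gamma> s - \<gamma> t) \<le> B * \<bar>s - t\<bar>) \<and>
     (AE s in lebesgue. s \<in> {0..1} \<longrightarrow>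
        (\<exists>D. (\<gamma> has_vector_derivative D) (at s within {0..1}) \<and>
             snd (snd D) = (1/2) * (fst (\<gamma> s) * fst (snd D) - fst (snd (\<gamma> s)) * fst D)))"

definition lengthL :: "(real \<times> real) set \<Rightarrow> (real \<Rightarrow> real \<times> real \<times> real) \<Rightarrow> real" where
  "lengthL Q \<gamma> = Sup {(\<Sum>i<n. normL Q (proj_xy (\<gamma> (t (Suc i))) - proj_xy (\<gamma> (t i)))) | n t.
        t 0 = 0 \<and> t n = 1 \<and> (\<forall>i<n. t i \<le> t (Suc i))}"

definition dCC :: "(real \<times> real) set \<Rightarrow> real \<times> real \<times> real \<Rightarrow> real \<times> real \<times> real \<Rightarrow> real" where
  "dCC Q p q = Inf {lengthL Q \<gamma> | \<gamma>. admissible \<gamma> \<and> \<gamma> 0 = p \<and> \<gamma> 1 = q}"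

end

theory Submission
  imports Defs
begin

text \<open>
  A horizontal curve from (p, t) to the origin is a planar path c from p to 0 together with a
  height z forced by z' = wedge(c, c')/2, and its length is the L-length of c. So
  d(t) = d_CC((p, t), 0) is an infimum of planar lengths, and three surgeries on such paths control
  it. Adding a small closed loop of amplitude r, traversed in the right direction, raises the final
  height by at least r^2/60 at a length cost O(r); hence d(t + \<delta>) \<le> d(t) + C sqrt \<delta> and d is
  continuous. Contracting a path towards the segment from p to 0 lowers its height while replacing
  its length L by a convex combination of L and \<parallel>-p\<parallel>_L = d(0); hence d is nondecreasing and
  strictly increasing wherever d(t) > d(0). Finally, a Riemann-sum form of the isoperimetric
  inequality bounds the height by (|p| + R L) R L / 2, where Q lies in the ball of radius R; so
  d(t) > d(0) for large t, and T is the largest t with d(t) = d(0).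
\<close>

section \<open>The gauge of a convex body\<close>

lemma cball_subset_if_symmetric_convex:
  fixes Q :: "'a::real_normed_vector set"
  assumes "convex Q" "\<And>v. v \<in> Q \<Longrightarrow> - v \<in> Q" "interior Q \<noteq> {}"
  obtains \<rho> where "0 < \<rho>" "cball 0 \<rho> \<subseteq> Q"
proof -
  obtain a e where e: "0 < e" "ball a e \<subseteq> Q" using assms(3) by (auto simp: mem_interior)
  have "v \<in> Q" if "norm v < e" for v
  proof -
    have av: "a + v \<in> Q" "- (a - v) \<in> Q"
      using e that assms(2)[of "a - v"] by (auto simp: dist_norm subset_iff)
    have "v = (1/2) *\<^sub>R (a + v) + (1/2) *\<^sub>R (- (a - v))"
      by (simp add: scaleR_add_right[symmetric] del: scaleR_add_right)
    with convexD[OF assms(1) av, of "1/2" "1/2"] show "v \<in> Q" by simp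
  qed
  then show ?thesis using e by (intro that[of "e / 2"]) auto
qed

locale gauge_body =
  fixes Q :: "(real \<times> real) set" and \<rho> R :: real
  assumes radius_pos: "0 < \<rho>" and cball_subset: "cball 0 \<rho> \<subseteq> Q"
    and subset_cball: "Q \<subseteq> cball 0 R" and convex: "convex Q"
begin

lemma R_pos: "0 < R"
proof -
  have "(\<rho>, 0) \<in> Q" using cball_subset radius_pos by auto
  then have "norm (\<rho>, 0::real) \<le> R" using subset_cball by auto
  then show ?thesis using radius_pos by simp
qed

lemma scaleR_inverse_mem:
  assumes "norm v / \<rho> \<le> r" "0 < r" shows "v /\<^sub>R r \<in> Q"
proof -
  have "norm (v /\<^sub>R r) \<le> \<rho>" using assms radius_pos by (simp add: field_simps)
  then show ?thesis using cball_subset by auto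
qed

lemma normL_le_scale:
  assumes "0 < r" "q \<in> Q" shows "normL Q (r *\<^sub>R q) \<le> r"
  unfolding normL_def using assms by (intro cInf_lower bdd_belowI[of _ 0]) auto

lemma normL_greatest:
  assumes "\<And>r q. 0 < r \<Longrightarrow> q \<in> Q \<Longrightarrow> v = r *\<^sub>R q \<Longrightarrow> m \<le> r"
  shows "m \<le> normL Q v"
  unfolding normL_def
proof (rule cInf_greatest)
  define r where "r = norm v / \<rho> + 1"
  have r: "0 < r" using radius_pos by (simp add: r_def add_nonneg_pos)
  have "v = r *\<^sub>R (v /\<^sub>R r)" "v /\<^sub>R r \<in> Q"
    using r scaleR_inverse_mem[OF _ r, of v] by (auto simp: r_def)
  then show "{r. 0 < r \<and> v \<in> (\<lambda>q. r *\<^sub>R q) ` Q} \<noteq> {}" using r by blast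
qed (use assms in auto)

lemma normL_nonneg: "0 \<le> normL Q v"
  by (rule normL_greatest) simp

lemma norm_le_normL: "norm v \<le> R * normL Q v"
proof -
  have "norm v / R \<le> normL Q v"
  proof (rule normL_greatest)
    fix r q assume "0 < r" "q \<in> Q" "v = r *\<^sub>R q"
    moreover have "norm q \<le> R" using \<open>q \<in> Q\<close> subset_cball by auto
    ultimately show "norm v / R \<le> r" using R_pos by (simp add: field_simps mult_left_mono)
  qed
  then show ?thesis using R_pos by (simp add: field_simps)
qed

lemma normL_le_norm: "normL Q v \<le> norm v / \<rho>"
proof (rule field_le_epsilon)
  fix e :: real assume "0 < e"
  then have r: "0 < norm v / \<rho> + e" using radius_pos by (simp add: add_nonneg_pos)
  from normL_le_scale[OF r scaleR_inverse_mem[OF _ r, of v]] r \<open>0 < e\<close>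
  show "normL Q v \<le> norm v / \<rho> + e" by simp
qed

lemma normL_scaleR_le:
  assumes "0 \<le> a" shows "normL Q (a *\<^sub>R v) \<le> a * normL Q v"
proof (cases "a = 0")
  case True
  then show ?thesis using normL_le_norm[of 0] by simp
next
  case False
  then have a: "0 < a" using assms by simp
  have "normL Q (a *\<^sub>R v) / a \<le> normL Q v"
  proof (rule normL_greatest)
    fix r q assume "0 < r" "q \<in> Q" "v = r *\<^sub>R q"
    then have "normL Q (a *\<^sub>R v) \<le> a * r" using a normL_le_scale[of "a * r" q] by simp
    then show "normL Q (a *\<^sub>R v) / a \<le> r" using a by (simp add: field_simps)
  qed
  then show ?thesis using a by (simp add: field_simps)
qed

lemma normL_triangle: "normL Q (v + w) \<le> normL Q v + normL Q w"
proof -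
  have "normL Q (v + w) - normL Q w \<le> normL Q v"
  proof (rule normL_greatest)
    fix r q assume r: "0 < r" "q \<in> Q" "v = r *\<^sub>R q"
    have "normL Q (v + w) - r \<le> normL Q w"
    proof (rule normL_greatest)
      fix r' q' assume r': "0 < r'" "q' \<in> Q" "w = r' *\<^sub>R q'"
      have "(r / (r + r')) *\<^sub>R q + (r' / (r + r')) *\<^sub>R q' \<in> Q"
        using r r' by (intro convexD[OF convex]) (auto simp: add_divide_distrib[symmetric])
      moreover have "v + w = (r + r') *\<^sub>R ((r / (r + r')) *\<^sub>R q + (r' / (r + r')) *\<^sub>R q')"
        using r r' by (simp add: scaleR_add_right)
      ultimately have "normL Q (v + w) \<le> r + r'"
        using r r' normL_le_scale[of "r + r'"] by simp
      then show "normL Q (v + w) - r \<le> r'" by simp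
    qed
    then show "normL Q (v + w) - normL Q w \<le> r" by simp
  qed
  then show ?thesis by simp
qed

end

section \<open>Lipschitz paths\<close>

definition lipschitz_path :: "(real \<Rightarrow> 'a::metric_space) \<Rightarrow> bool" where
  "lipschitz_path f \<longleftrightarrow> (\<exists>C. C-lipschitz_on {0..1} f)"

named_theorems lipschitz_path_intros

lemma lipschitz_pathI: "C-lipschitz_on {0..1} f \<Longrightarrow> lipschitz_path f"
  unfolding lipschitz_path_def by blast

lemma lipschitz_path_iff:
  "lipschitz_path f \<longleftrightarrow> (\<exists>B. \<forall>s\<in>{0..1}. \<forall>t\<in>{0..1}. norm (f s - f t) \<le> B * \<bar>s - t\<bar>)"
proof
  assume "\<exists>B. \<forall>s\<in>{0..1}. \<forall>t\<in>{0..1}. norm (f s - f t) \<le> B * \<bar>s - t\<bar>"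
  then obtain B where B: "\<forall>s\<in>{0..1}. \<forall>t\<in>{0..1}. norm (f s - f t) \<le> B * \<bar>s - t\<bar>" by blast
  have "(max B 0)-lipschitz_on {0..1} f"
  proof (rule lipschitz_onI)
    fix s t :: real assume "s \<in> {0..1}" "t \<in> {0..1}"
    then have "norm (f s - f t) \<le> B * \<bar>s - t\<bar>" using B by blast
    also have "\<dots> \<le> max B 0 * \<bar>s - t\<bar>" by (intro mult_right_mono) auto
    finally show "dist (f s) (f t) \<le> max B 0 * dist s t" by (simp add: dist_norm)
  qed simp
  then show "lipschitz_path f" by (rule lipschitz_pathI)
qed (auto simp: lipschitz_path_def lipschitz_on_def dist_norm)

lemma lipschitz_path_bounded:
  fixes f :: "real \<Rightarrow> 'a::real_normed_vector"
  assumes "lipschitz_path f" obtains M where "\<And>u. u \<in> {0..1} \<Longrightarrow> norm (f u) \<le> M"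
proof -
  obtain C where C: "C-lipschitz_on {0..1} f" using assms by (auto simp: lipschitz_path_def)
  have "norm (f u) \<le> norm (f 0) + C" if "u \<in> {0..1}" for u
  proof -
    have "norm (f u - f 0) \<le> C * norm (u - 0)" using lipschitz_on_normD[OF C, of u 0] that by auto
    also have "\<dots> \<le> C" using that lipschitz_on_nonneg[OF C] by (simp add: mult_left_le)
    finally show ?thesis using norm_triangle_sub[of "f u" "f 0"] by linarith
  qed
  then show ?thesis using that by blast
qed

lemma lipschitz_path_const [lipschitz_path_intros]: "lipschitz_path (\<lambda>u. c)"
  and lipschitz_path_id [lipschitz_path_intros]: "lipschitz_path (\<lambda>u. u)"
  by (auto intro: lipschitz_pathI lipschitz_intros)

lemma lipschitz_path_add [lipschitz_path_intros]:
  fixes f g :: "real \<Rightarrow> 'a::real_normed_vector"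
  shows "lipschitz_path f \<Longrightarrow> lipschitz_path g \<Longrightarrow> lipschitz_path (\<lambda>u. f u + g u)"
  unfolding lipschitz_path_def by (blast intro: lipschitz_on_add)

lemma lipschitz_path_diff [lipschitz_path_intros]:
  fixes f g :: "real \<Rightarrow> 'a::real_normed_vector"
  shows "lipschitz_path f \<Longrightarrow> lipschitz_path g \<Longrightarrow> lipschitz_path (\<lambda>u. f u - g u)"
  unfolding lipschitz_path_def by (blast intro: lipschitz_on_diff)

lemma lipschitz_path_bounded_linear:
  assumes "bounded_linear L" "lipschitz_path f" shows "lipschitz_path (\<lambda>u. L (f u))"
proof -
  obtain K where "K-lipschitz_on UNIV L"
    using bounded_linear.lipschitz_boundE[OF assms(1)] by blast
  moreover obtain C where "C-lipschitz_on {0..1} f" using assms(2) by (auto simp: lipschitz_path_def)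
  ultimately show ?thesis
    by (blast intro: lipschitz_pathI lipschitz_on_compose2 lipschitz_on_subset)
qed

lemma lipschitz_path_Pair [lipschitz_path_intros]:
  fixes f :: "real \<Rightarrow> 'a::metric_space" and g :: "real \<Rightarrow> 'b::metric_space"
  shows "lipschitz_path f \<Longrightarrow> lipschitz_path g \<Longrightarrow> lipschitz_path (\<lambda>u. (f u, g u))"
  unfolding lipschitz_path_def by (blast intro: lipschitz_on_Pair)

lemma lipschitz_path_bilinear:
  assumes pr: "bounded_bilinear pr" and f: "lipschitz_path f" and g: "lipschitz_path g"
  shows "lipschitz_path (\<lambda>u. pr (f u) (g u))"
proof -
  interpret bounded_bilinear pr by (rule pr)
  obtain F G where F: "F-lipschitz_on {0..1} f" and G: "G-lipschitz_on {0..1} g"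
    using f g by (auto simp: lipschitz_path_def)
  obtain A where A: "\<And>u. u \<in> {0..1} \<Longrightarrow> norm (f u) \<le> A" using lipschitz_path_bounded[OF f] by blast
  obtain B where B: "\<And>u. u \<in> {0..1} \<Longrightarrow> norm (g u) \<le> B" using lipschitz_path_bounded[OF g] by blast
  obtain K where K: "\<And>a b. norm (pr a b) \<le> norm a * norm b * K" and "0 < K"
    using pos_bounded by blast
  have "0 \<le> A" "0 \<le> B" using A[of 0] B[of 0] by (auto intro: order_trans[OF norm_ge_zero])
  have "(K * (F * B + A * G))-lipschitz_on {0..1} (\<lambda>u. pr (f u) (g u))"
  proof (rule lipschitz_onI)
    fix s t :: real assume st: "s \<in> {0..1}" "t \<in> {0..1}"
    have "pr (f s) (g s) - pr (f t) (g t) = pr (f s - f t) (g s) + pr (f t) (g s - g t)"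
      by (simp add: diff_left diff_right)
    then have "norm (pr (f s) (g s) - pr (f t) (g t))
        \<le> norm (f s - f t) * norm (g s) * K + norm (f t) * norm (g s - g t) * K"
      by (metis K add_mono norm_triangle_le)
    also have "\<dots> \<le> (F * dist s t) * B * K + A * (G * dist s t) * K"
      using \<open>0 < K\<close> \<open>0 \<le> A\<close> st A[of t] B[of s] lipschitz_onD[OF F st] lipschitz_onD[OF G st]
        lipschitz_on_nonneg[OF F]
      by (intro add_mono mult_right_mono mult_mono) (auto simp: dist_norm)
    finally show "dist (pr (f s) (g s)) (pr (f t) (g t)) \<le> K * (F * B + A * G) * dist s t"
      by (simp add: dist_norm algebra_simps)
  next
    show "0 \<le> K * (F * B + A * G)"
      using \<open>0 < K\<close> \<open>0 \<le> A\<close> \<open>0 \<le> B\<close> lipschitz_on_nonneg[OF F] lipschitz_on_nonneg[OF G] by simp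
  qed
  then show ?thesis by (rule lipschitz_pathI)
qed

lemma lipschitz_path_scaleR [lipschitz_path_intros]:
  fixes g :: "real \<Rightarrow> 'a::real_normed_vector"
  shows "lipschitz_path f \<Longrightarrow> lipschitz_path g \<Longrightarrow> lipschitz_path (\<lambda>u. f u *\<^sub>R g u)"
  by (rule lipschitz_path_bilinear[OF bounded_bilinear_scaleR])

lemma lipschitz_path_mult [lipschitz_path_intros]:
  "lipschitz_path f \<Longrightarrow> lipschitz_path h \<Longrightarrow> lipschitz_path (\<lambda>u. f u * h u :: real)"
  by (rule lipschitz_path_bilinear[OF bounded_bilinear_mult])

lemma lipschitz_path_divide [lipschitz_path_intros]:
  "lipschitz_path f \<Longrightarrow> lipschitz_path (\<lambda>u. f u / c :: real)"
  using lipschitz_path_mult[of f "\<lambda>u. 1 / c", OF _ lipschitz_path_const] by simp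

lemma lipschitz_path_power [lipschitz_path_intros]:
  "lipschitz_path f \<Longrightarrow> lipschitz_path (\<lambda>u. f u ^ n :: real)"
  by (induction n) (simp_all add: lipschitz_path_const lipschitz_path_mult)

lemma lipschitz_on_if_vector_derivative_bounded:
  assumes "\<And>u. u \<in> {a..b} \<Longrightarrow> (f has_vector_derivative f' u) (at u within {a..b})"
    and "\<And>u. u \<in> {a..b} \<Longrightarrow> norm (f' u) \<le> B" and "0 \<le> B"
  shows "B-lipschitz_on {a..b} f"
proof (rule bounded_derivative_imp_lipschitz)
  show "(f has_derivative (\<lambda>h. h *\<^sub>R f' u)) (at u within {a..b})" if "u \<in> {a..b}" for u
    using assms(1)[OF that] by (simp add: has_vector_derivative_def)
  show "onorm (\<lambda>h. h *\<^sub>R f' u) \<le> B" if "u \<in> {a..b}" for u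
    using assms(2)[OF that] by (simp add: onorm_scaleR_left[OF bounded_linear_ident] onorm_id)
qed (use assms(3) in auto)

lemma lipschitz_path_integral [lipschitz_path_intros]:
  fixes h :: "real \<Rightarrow> real"
  assumes "lipschitz_path h" shows "lipschitz_path (\<lambda>u. integral {0..u} h)"
proof -
  obtain M where M: "\<And>u. u \<in> {0..1} \<Longrightarrow> norm (h u) \<le> M" using lipschitz_path_bounded[OF assms] by blast
  have "continuous_on {0..1} h"
    using assms lipschitz_on_continuous_on by (auto simp: lipschitz_path_def)
  then have "M-lipschitz_on {0..1} (\<lambda>u. integral {0..u} h)"
    using M[of 0] by (intro lipschitz_on_if_vector_derivative_bounded[where f'=h] M)
      (auto simp: has_real_derivative_iff_has_vector_derivative[symmetric]
        intro: integral_has_real_derivative order_trans[OF norm_ge_zero])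
  then show ?thesis by (rule lipschitz_pathI)
qed

section \<open>Derivatives of Lipschitz functions\<close>

lemma vector_derivative_norm_le_lipschitz:
  fixes f :: "real \<Rightarrow> 'a::real_normed_vector"
  assumes D: "(f has_vector_derivative D) (at x within S)" and f: "B-lipschitz_on S f"
    and x: "x \<in> S" and nontrivial: "at x within S \<noteq> bot"
  shows "norm D \<le> B"
proof -
  let ?err = "\<lambda>y. norm ((f y - f x) - (y - x) *\<^sub>R D) / norm (y - x)"
  have "(?err \<longlongrightarrow> 0) (at x within S)"
    using D by (simp add: has_vector_derivative_def has_derivative_iff_norm)
  moreover have "\<forall>\<^sub>F y in at x within S. norm D - B \<le> ?err y"
    unfolding eventually_at_filter
  proof (rule always_eventually, intro allI impI)
    fix y assume y: "y \<noteq> x" "y \<in> S"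
    define e where "e = norm ((f y - f x) - (y - x) *\<^sub>R D)"
    have "\<bar>y - x\<bar> * norm D = norm ((y - x) *\<^sub>R D)" by simp
    also have "\<dots> \<le> norm (f y - f x) + e"
      using norm_triangle_sub[of "(y - x) *\<^sub>R D" "f y - f x"] by (simp add: e_def norm_minus_commute)
    also have "\<dots> \<le> B * \<bar>y - x\<bar> + e"
      using lipschitz_on_normD[OF f y(2) x] by simp
    finally have "(norm D - B) * \<bar>y - x\<bar> \<le> e" by (simp add: algebra_simps)
    then show "norm D - B \<le> ?err y"
      using y by (simp add: e_def pos_le_divide_eq)
  qed
  ultimately have "norm D - B \<le> 0" by (rule tendsto_lowerbound[OF _ _ nontrivial])
  then show ?thesis by simp
qed

lemma decreasing_if_deriv_neg_ae:
  fixes h :: "real \<Rightarrow> real"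
  assumes ab: "a \<le> b" and cont: "continuous_on {a..b} h"
    and neg: "negligible (h ` ({a..b} \<inter> N))"
    and der: "\<And>u. u \<in> {a..b} \<Longrightarrow> u \<notin> N \<Longrightarrow> \<exists>D. (h has_real_derivative D) (at u within {a..b}) \<and> D < 0"
  shows "h b \<le> h a"
proof (rule ccontr)
  assume "\<not> h b \<le> h a"
  then have hab: "h a < h b" by simp
  have "\<not> negligible {h a<..<h b}" using hab by (intro open_not_negligible) auto
  then obtain y where y: "y \<in> {h a<..<h b}" "y \<notin> h ` ({a..b} \<inter> N)"
    using neg negligible_subset by blast
  define S where "S = {u \<in> {a..b}. h u = y}"
  have clS: "closed S" unfolding S_def by (intro continuous_closed_preimage_constant cont) auto
  have neS: "S \<noteq> {}" using IVT'[of h a y b] y ab cont by (auto simp: S_def)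
  have bdS: "bdd_above S" unfolding S_def by (auto intro: bdd_aboveI[where M=b])
  \<comment> \<open>The last crossing of the level y: h stays above y to its right, forcing a nonnegative derivative.\<close>
  define u where "u = Sup S"
  have "u \<in> S" unfolding u_def using closed_contains_Sup[OF neS bdS clS] .
  then have ua: "a \<le> u" "u \<le> b" "h u = y" by (auto simp: S_def)
  have ub: "u < b" using ua y by (cases "u = b") auto
  have uN: "u \<notin> N" using ua y by auto
  have above: "h v > y" if uv: "u < v" "v \<le> b" for v
  proof (rule ccontr)
    assume "\<not> h v > y"
    moreover have "continuous_on {v..b} h" by (rule continuous_on_subset[OF cont]) (use ua that in auto)
    ultimately obtain w where w: "v \<le> w" "w \<le> b" "h w = y" using IVT'[of h v y b] y uv by auto
    then have "w \<in> S" using ua uv by (auto simp: S_def)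
    then have "w \<le> u" unfolding u_def using bdS by (rule cSup_upper)
    then show False using w uv by simp
  qed
  obtain D where D: "(h has_real_derivative D) (at u within {a..b})" "D < 0"
    using der[of u] ua uN by auto
  have "(h has_real_derivative D) (at u within {u..b})"
    by (rule DERIV_subset[OF D(1)]) (use ua in auto)
  then have lim: "((\<lambda>v. (h v - h u) / (v - u)) \<longlongrightarrow> D) (at_right u)"
    using ub by (simp add: has_field_derivative_iff at_within_Icc_at_right)
  have "\<forall>\<^sub>F v in at_right u. 0 \<le> (h v - h u) / (v - u)"
    unfolding eventually_at_right[OF ub]
    using above ua ub by (intro exI[where x=b]) (auto intro!: divide_nonneg_pos less_imp_le)
  then have "0 \<le> D" using tendsto_lowerbound[OF lim] trivial_limit_at_right_real by blast
  then show False using D by simp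
qed

lemma lipschitz_diff_le_ae_deriv:
  fixes g :: "real \<Rightarrow> real"
  assumes ab: "a \<le> b" and lip: "K-lipschitz_on {a..b} g" and N: "negligible N"
    and der: "\<And>u. u \<in> {a..b} \<Longrightarrow> u \<notin> N \<Longrightarrow> \<exists>D. (g has_real_derivative D) (at u within {a..b}) \<and> D \<le> M"
  shows "g b - g a \<le> M * (b - a)"
proof (rule field_le_epsilon)
  fix \<epsilon> :: real assume "0 < \<epsilon>"
  define e where "e = \<epsilon> / (b - a + 1)"
  have e: "0 < e" using \<open>0 < \<epsilon>\<close> ab by (simp add: e_def)
  define h where "h u = g u - (M + e) * u" for u
  have "(K + \<bar>M + e\<bar> * 1)-lipschitz_on {a..b} h"
    unfolding h_def by (intro lipschitz_on_diff lip lipschitz_on_cmult_real lipschitz_on_id)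
  then have "h b \<le> h a"
  proof (intro decreasing_if_deriv_neg_ae[OF ab])
    assume h: "(K + \<bar>M + e\<bar> * 1)-lipschitz_on {a..b} h"
    then show "continuous_on {a..b} h" by (rule lipschitz_on_continuous_on)
    show "negligible (h ` ({a..b} \<inter> N))"
    proof (rule negligible_locally_Lipschitz_image)
      show "negligible ({a..b} \<inter> N)" by (rule negligible_subset[OF N]) auto
      show "\<exists>T B. open T \<and> x \<in> T \<and> (\<forall>y\<in>{a..b} \<inter> N \<inter> T. norm (h y - h x) \<le> B * norm (y - x))"
        if "x \<in> {a..b} \<inter> N" for x
        using that lipschitz_on_normD[OF h] by (intro exI[of _ UNIV] exI[of _ "K + \<bar>M + e\<bar>"]) auto
    qed simp
    fix u assume "u \<in> {a..b}" "u \<notin> N"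
    then obtain D where D: "(g has_real_derivative D) (at u within {a..b})" "D \<le> M" using der by blast
    have "(h has_real_derivative D - (M + e)) (at u within {a..b})"
      unfolding h_def by (auto intro!: derivative_eq_intros D(1))
    then show "\<exists>D. (h has_real_derivative D) (at u within {a..b}) \<and> D < 0" using D(2) e by force
  qed
  then have "g b - g a \<le> (M + e) * (b - a)" by (simp add: h_def algebra_simps)
  also have "\<dots> \<le> M * (b - a) + \<epsilon>"
    using \<open>0 < \<epsilon>\<close> ab by (simp add: e_def field_simps)
  finally show "g b - g a \<le> M * (b - a) + \<epsilon>" .
qed

lemma lipschitz_abs_diff_le_ae_deriv:
  fixes g :: "real \<Rightarrow> real"
  assumes ab: "a \<le> b" and lip: "K-lipschitz_on {a..b} g" and N: "negligible N"
    and der: "\<And>u. u \<in> {a..b} \<Longrightarrow> u \<notin> N \<Longrightarrow> \<exists>D. (g has_real_derivative D) (at u within {a..b}) \<and> \<bar>D\<bar> \<le> M"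
  shows "\<bar>g b - g a\<bar> \<le> M * (b - a)"
proof -
  have "g b - g a \<le> M * (b - a)"
    using der by (intro lipschitz_diff_le_ae_deriv[OF ab lip N]) (force simp: abs_le_iff)
  moreover have "(- g b) - (- g a) \<le> M * (b - a)"
  proof (rule lipschitz_diff_le_ae_deriv[OF ab _ N])
    show "(\<bar>-1\<bar> * K)-lipschitz_on {a..b} (\<lambda>u. - g u)"
      using lipschitz_on_cmult_real[OF lip, of "-1"] by simp
    fix u assume "u \<in> {a..b}" "u \<notin> N"
    then obtain D where "(g has_real_derivative D) (at u within {a..b})" "\<bar>D\<bar> \<le> M" using der by blast
    then show "\<exists>D. ((\<lambda>u. - g u) has_real_derivative D) (at u within {a..b}) \<and> D \<le> M"
      by (intro exI[of _ "- D"]) (auto intro: derivative_intros)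
  qed
  ultimately show ?thesis by simp
qed

lemma continuous_on_if_holder:
  fixes f :: "real \<Rightarrow> 'a::metric_space"
  assumes "\<And>x y. x \<in> S \<Longrightarrow> y \<in> S \<Longrightarrow> dist (f x) (f y) \<le> C * sqrt (dist x y)"
  shows "continuous_on S f"
  unfolding continuous_on_iff
proof (intro ballI allI impI)
  fix x and e :: real assume x: "x \<in> S" and e: "0 < e"
  define d where "d = (e / (\<bar>C\<bar> + 1))\<^sup>2"
  show "\<exists>d>0. \<forall>y\<in>S. dist y x < d \<longrightarrow> dist (f y) (f x) < e"
  proof (intro exI[of _ d] conjI ballI impI)
    show "0 < d" using e by (simp add: d_def)
    fix y assume y: "y \<in> S" and "dist y x < d"
    then have "sqrt (dist y x) < e / (\<bar>C\<bar> + 1)"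
      using e by (simp add: d_def real_less_lsqrt)
    then have "(\<bar>C\<bar> + 1) * sqrt (dist y x) < e"
      by (simp add: pos_less_divide_eq mult.commute add_nonneg_pos)
    moreover have "dist (f y) (f x) \<le> (\<bar>C\<bar> + 1) * sqrt (dist y x)"
      using assms[OF y x] mult_right_mono[of C "\<bar>C\<bar> + 1" "sqrt (dist y x)"] by force
    ultimately show "dist (f y) (f x) < e" by simp
  qed
qed

section \<open>Horizontal curves\<close>

definition wedge :: "real \<times> real \<Rightarrow> real \<times> real \<Rightarrow> real" where
  "wedge a b = fst a * snd b - snd a * fst b"

lemma abs_wedge_le: "\<bar>wedge a b\<bar> \<le> norm a * norm b"
proof -
  have "(norm a * norm b)\<^sup>2 - (wedge a b)\<^sup>2 = (fst a * fst b + snd a * snd b)\<^sup>2"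
    by (cases a, cases b) (simp add: wedge_def norm_Pair power_mult_distrib algebra_simps power2_eq_square)
  then have "(wedge a b)\<^sup>2 \<le> (norm a * norm b)\<^sup>2"
    using zero_le_power2[of "fst a * fst b + snd a * snd b"] by linarith
  then show ?thesis using abs_le_square_iff[of "wedge a b" "norm a * norm b"] by simp
qed

lemma bounded_bilinear_wedge: "bounded_bilinear wedge"
proof
  show "\<exists>K. \<forall>a b. norm (wedge a b) \<le> norm a * norm b * K"
    using abs_wedge_le by (intro exI[of _ 1]) simp
qed (auto simp: wedge_def algebra_simps)

lemma lipschitz_path_wedge [lipschitz_path_intros]:
  "lipschitz_path f \<Longrightarrow> lipschitz_path g \<Longrightarrow> lipschitz_path (\<lambda>u. wedge (f u) (g u))"
  by (rule lipschitz_path_bilinear[OF bounded_bilinear_wedge])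

lemma wedge_has_vector_derivative:
  assumes "(f has_vector_derivative f') (at x within S)" "(g has_vector_derivative g') (at x within S)"
  shows "((\<lambda>u. wedge (f u) (g u)) has_real_derivative wedge (f x) g' + wedge f' (g x)) (at x within S)"
  using bounded_bilinear.has_vector_derivative[OF bounded_bilinear_wedge assms]
  by (simp add: has_real_derivative_iff_has_vector_derivative)

definition heis_curve :: "(real \<Rightarrow> real \<times> real) \<Rightarrow> (real \<Rightarrow> real) \<Rightarrow> real \<Rightarrow> real \<times> real \<times> real" where
  "heis_curve c z u = (fst (c u), snd (c u), z u)"

definition horizontal :: "(real \<Rightarrow> real \<times> real) \<Rightarrow> (real \<Rightarrow> real) \<Rightarrow> bool" where
  "horizontal c z \<longleftrightarrow> lipschitz_path c \<and> lipschitz_path z \<and>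
     (AE s in lebesgue. s \<in> {0..1} \<longrightarrow> (\<exists>c'. (c has_vector_derivative c') (at s within {0..1}) \<and>
        (z has_real_derivative wedge (c s) c' / 2) (at s within {0..1})))"

lemma bounded_linear_proj_xy: "bounded_linear proj_xy"
  unfolding proj_xy_def[abs_def]
  by (intro bounded_linear_Pair bounded_linear_fst bounded_linear_compose[OF bounded_linear_fst bounded_linear_snd])

lemma heis_curve_proj: "heis_curve (\<lambda>u. proj_xy (\<gamma> u)) (\<lambda>u. snd (snd (\<gamma> u))) = \<gamma>"
  by (auto simp: heis_curve_def proj_xy_def fun_eq_iff)

lemma lipschitz_path_heis_curve_iff:
  "lipschitz_path (heis_curve c z) \<longleftrightarrow> lipschitz_path c \<and> lipschitz_path z"
proof
  assume \<gamma>: "lipschitz_path (heis_curve c z)"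
  have "lipschitz_path (\<lambda>u. proj_xy (heis_curve c z u))"
    by (rule lipschitz_path_bounded_linear[OF bounded_linear_proj_xy \<gamma>])
  moreover have "lipschitz_path (\<lambda>u. snd (snd (heis_curve c z u)))"
    by (rule lipschitz_path_bounded_linear[OF bounded_linear_compose[OF bounded_linear_snd bounded_linear_snd] \<gamma>])
  ultimately show "lipschitz_path c \<and> lipschitz_path z" by (simp add: heis_curve_def proj_xy_def)
next
  assume "lipschitz_path c \<and> lipschitz_path z"
  then show "lipschitz_path (heis_curve c z)"
    unfolding heis_curve_def
    by (intro lipschitz_path_Pair lipschitz_path_bounded_linear[OF bounded_linear_fst]
        lipschitz_path_bounded_linear[OF bounded_linear_snd]) auto
qed

lemma heis_curve_contact_iff:
  "(\<exists>D. (heis_curve c z has_vector_derivative D) (at s within {0..1}) \<and>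
      snd (snd D) = 1/2 * (fst (heis_curve c z s) * fst (snd D) - fst (snd (heis_curve c z s)) * fst D))
   \<longleftrightarrow> (\<exists>c'. (c has_vector_derivative c') (at s within {0..1}) \<and>
      (z has_real_derivative wedge (c s) c' / 2) (at s within {0..1}))"
proof
  assume "\<exists>D. (heis_curve c z has_vector_derivative D) (at s within {0..1}) \<and>
      snd (snd D) = 1/2 * (fst (heis_curve c z s) * fst (snd D) - fst (snd (heis_curve c z s)) * fst D)"
  then obtain D where D: "(heis_curve c z has_vector_derivative D) (at s within {0..1})"
    and D3: "snd (snd D) = 1/2 * (fst (c s) * fst (snd D) - snd (c s) * fst D)"
    by (auto simp: heis_curve_def)
  have "((\<lambda>u. (fst (heis_curve c z u), fst (snd (heis_curve c z u)))) has_vector_derivative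
      (fst D, fst (snd D))) (at s within {0..1})"
    using D by (intro has_vector_derivative_Pair bounded_linear.has_vector_derivative[OF bounded_linear_fst]
        bounded_linear.has_vector_derivative[OF bounded_linear_snd])
  moreover have "((\<lambda>u. snd (snd (heis_curve c z u))) has_real_derivative snd (snd D)) (at s within {0..1})"
    using D unfolding has_real_derivative_iff_has_vector_derivative
    by (intro bounded_linear.has_vector_derivative[OF bounded_linear_snd]
        bounded_linear.has_vector_derivative[OF bounded_linear_snd])
  ultimately show "\<exists>c'. (c has_vector_derivative c') (at s within {0..1}) \<and>
      (z has_real_derivative wedge (c s) c' / 2) (at s within {0..1})"
    using D3 by (intro exI[of _ "(fst D, fst (snd D))"]) (simp add: heis_curve_def wedge_def)
next
  assume "\<exists>c'. (c has_vector_derivative c') (at s within {0..1}) \<and>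
      (z has_real_derivative wedge (c s) c' / 2) (at s within {0..1})"
  then obtain c' where c': "(c has_vector_derivative c') (at s within {0..1})"
    and z': "(z has_real_derivative wedge (c s) c' / 2) (at s within {0..1})" by blast
  have "(heis_curve c z has_vector_derivative (fst c', snd c', wedge (c s) c' / 2)) (at s within {0..1})"
    unfolding heis_curve_def using c' z'
    by (intro has_vector_derivative_Pair bounded_linear.has_vector_derivative[OF bounded_linear_fst]
        bounded_linear.has_vector_derivative[OF bounded_linear_snd])
      (simp_all add: has_real_derivative_iff_has_vector_derivative)
  then show "\<exists>D. (heis_curve c z has_vector_derivative D) (at s within {0..1}) \<and>
      snd (snd D) = 1/2 * (fst (heis_curve c z s) * fst (snd D) - fst (snd (heis_curve c z s)) * fst D)"
    by (intro exI[of _ "(fst c', snd c', wedge (c s) c' / 2)"]) (simp add: heis_curve_def wedge_def)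
qed

lemma admissible_heis_curve: "admissible (heis_curve c z) \<longleftrightarrow> horizontal c z"
  using lipschitz_path_heis_curve_iff[of c z]
  unfolding admissible_def horizontal_def heis_curve_contact_iff lipschitz_path_iff[of "heis_curve c z"]
  by simp

lemma horizontal_negligibleE:
  assumes "horizontal c z"
  obtains N where "negligible N"
    and "\<And>s. s \<in> {0..1} \<Longrightarrow> s \<notin> N \<Longrightarrow> \<exists>c'. (c has_vector_derivative c') (at s within {0..1}) \<and>
           (z has_real_derivative wedge (c s) c' / 2) (at s within {0..1})"
proof -
  have "AE s in lebesgue. s \<in> {0..1} \<longrightarrow> (\<exists>c'. (c has_vector_derivative c') (at s within {0..1}) \<and>
           (z has_real_derivative wedge (c s) c' / 2) (at s within {0..1}))"
    using assms unfolding horizontal_def by (rule conjunct2[THEN conjunct2])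
  then obtain N where N: "{s \<in> space lebesgue. \<not> (s \<in> {0..1} \<longrightarrow> (\<exists>c'. (c has_vector_derivative c') (at s within {0..1}) \<and>
           (z has_real_derivative wedge (c s) c' / 2) (at s within {0..1})))} \<subseteq> N"
    and "emeasure lebesgue N = 0" "N \<in> sets lebesgue"
    by (rule AE_E)
  then have "negligible N" by (simp add: negligible_iff_null_sets null_sets_def)
  then show ?thesis
  proof (rule that)
    fix s :: real assume "s \<in> {0..1}" "s \<notin> N"
    then show "\<exists>c'. (c has_vector_derivative c') (at s within {0..1}) \<and>
           (z has_real_derivative wedge (c s) c' / 2) (at s within {0..1})"
      using subsetD[OF N, of s] by auto
  qed
qed

lemma horizontal_transfer:
  assumes "horizontal c z" "lipschitz_path c2" "lipschitz_path z2"
    and "\<And>u c'. u \<in> {0..1} \<Longrightarrow> (c has_vector_derivative c') (at u within {0..1}) \<Longrightarrow>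
           (z has_real_derivative wedge (c u) c' / 2) (at u within {0..1}) \<Longrightarrow>
           \<exists>c2'. (c2 has_vector_derivative c2') (at u within {0..1}) \<and>
             (z2 has_real_derivative wedge (c2 u) c2' / 2) (at u within {0..1})"
  shows "horizontal c2 z2"
proof -
  have "AE u in lebesgue. u \<in> {0..1} \<longrightarrow> (\<exists>c'. (c has_vector_derivative c') (at u within {0..1}) \<and>
           (z has_real_derivative wedge (c u) c' / 2) (at u within {0..1}))"
    using assms(1) unfolding horizontal_def by (rule conjunct2[THEN conjunct2])
  then have "AE u in lebesgue. u \<in> {0..1} \<longrightarrow> (\<exists>c2'. (c2 has_vector_derivative c2') (at u within {0..1}) \<and>
           (z2 has_real_derivative wedge (c2 u) c2' / 2) (at u within {0..1}))"
  proof (rule eventually_mono, intro impI)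
    fix u assume "u \<in> {0..1} \<longrightarrow> (\<exists>c'. (c has_vector_derivative c') (at u within {0..1}) \<and>
           (z has_real_derivative wedge (c u) c' / 2) (at u within {0..1}))" and u: "u \<in> {0..1}"
    then obtain c' where "(c has_vector_derivative c') (at u within {0..1})"
      "(z has_real_derivative wedge (c u) c' / 2) (at u within {0..1})" by blast
    from assms(4)[OF u this] show "\<exists>c2'. (c2 has_vector_derivative c2') (at u within {0..1}) \<and>
           (z2 has_real_derivative wedge (c2 u) c2' / 2) (at u within {0..1})" .
  qed
  then show ?thesis using assms(2,3) by (simp add: horizontal_def)
qed

section \<open>Length of planar paths\<close>

definition partition01 :: "nat \<Rightarrow> (nat \<Rightarrow> real) \<Rightarrow> bool" where
  "partition01 n t \<longleftrightarrow> t 0 = 0 \<and> t n = 1 \<and> (\<forall>i<n. t i \<le> t (Suc i))"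

definition inscribed_length :: "(real \<times> real) set \<Rightarrow> (real \<Rightarrow> real \<times> real) \<Rightarrow> nat \<Rightarrow> (nat \<Rightarrow> real) \<Rightarrow> real" where
  "inscribed_length Q c n t = (\<Sum>i<n. normL Q (c (t (Suc i)) - c (t i)))"

definition plane_length :: "(real \<times> real) set \<Rightarrow> (real \<Rightarrow> real \<times> real) \<Rightarrow> real" where
  "plane_length Q c = Sup {inscribed_length Q c n t | n t. partition01 n t}"

lemma lengthL_heis_curve: "lengthL Q (heis_curve c z) = plane_length Q c"
proof -
  have "proj_xy (heis_curve c z u) = c u" for u by (simp add: heis_curve_def proj_xy_def)
  then show ?thesis by (simp add: lengthL_def plane_length_def inscribed_length_def partition01_def)
qed

lemma partition01_mono:
  assumes "partition01 n t" "i \<le> j" "j \<le> n" shows "t i \<le> t j"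
  using assms(2,3)
proof (induction j)
  case (Suc j)
  then show ?case
    using assms(1) by (cases "i = Suc j") (auto simp: partition01_def intro: order_trans)
qed simp

lemma partition01_range:
  assumes "partition01 n t" "i \<le> n" shows "t i \<in> {0..1}"
  using partition01_mono[OF assms(1), of 0 i] partition01_mono[OF assms(1), of i n] assms
  by (auto simp: partition01_def)

lemma partition01_telescope: "partition01 n t \<Longrightarrow> (\<Sum>i<n. t (Suc i) - t i) = 1"
  by (simp add: sum_lessThan_telescope partition01_def)

context gauge_body
begin

lemma inscribed_length_le_lipschitz:
  assumes c: "B-lipschitz_on {0..1} c" and t: "partition01 n t"
  shows "inscribed_length Q c n t \<le> B / \<rho>"
proof -
  have "inscribed_length Q c n t \<le> (\<Sum>i<n. B / \<rho> * (t (Suc i) - t i))"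
    unfolding inscribed_length_def
  proof (rule sum_mono)
    fix i assume i: "i \<in> {..<n}"
    have ti: "t i \<in> {0..1}" "t (Suc i) \<in> {0..1}" "t i \<le> t (Suc i)"
      using partition01_range[OF t] i t by (auto simp: partition01_def)
    have "normL Q (c (t (Suc i)) - c (t i)) \<le> norm (c (t (Suc i)) - c (t i)) / \<rho>"
      by (rule normL_le_norm)
    also have "\<dots> \<le> B * norm (t (Suc i) - t i) / \<rho>"
      using lipschitz_on_normD[OF c ti(2,1)] radius_pos by (simp add: divide_right_mono)
    finally show "normL Q (c (t (Suc i)) - c (t i)) \<le> B / \<rho> * (t (Suc i) - t i)"
      using ti by simp
  qed
  also have "\<dots> = B / \<rho> * (\<Sum>i<n. t (Suc i) - t i)" by (simp add: sum_distrib_left)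
  also have "\<dots> = B / \<rho>" using partition01_telescope[OF t] by simp
  finally show ?thesis .
qed

lemma bdd_above_inscribed_length:
  assumes "lipschitz_path c" shows "bdd_above {inscribed_length Q c n t | n t. partition01 n t}"
proof -
  obtain B where "B-lipschitz_on {0..1} c" using assms by (auto simp: lipschitz_path_def)
  then show ?thesis by (auto intro!: bdd_aboveI[of _ "B / \<rho>"] inscribed_length_le_lipschitz)
qed

lemma inscribed_length_le_plane_length:
  "lipschitz_path c \<Longrightarrow> partition01 n t \<Longrightarrow> inscribed_length Q c n t \<le> plane_length Q c"
  unfolding plane_length_def by (rule cSup_upper) (auto intro: bdd_above_inscribed_length)

lemma plane_length_le:
  "(\<And>n t. partition01 n t \<Longrightarrow> inscribed_length Q c n t \<le> M) \<Longrightarrow> plane_length Q c \<le> M"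
proof -
  have "partition01 1 (\<lambda>i. if i = 0 then 0 else 1)" by (simp add: partition01_def)
  then show "(\<And>n t. partition01 n t \<Longrightarrow> inscribed_length Q c n t \<le> M) \<Longrightarrow> plane_length Q c \<le> M"
    unfolding plane_length_def by (intro cSup_least) auto
qed

lemma plane_length_le_lipschitz: "B-lipschitz_on {0..1} c \<Longrightarrow> plane_length Q c \<le> B / \<rho>"
  by (intro plane_length_le inscribed_length_le_lipschitz)

lemma chord_le_plane_length:
  assumes c: "lipschitz_path c" and u: "u \<in> {0..1}"
  shows "normL Q (c u - c 0) \<le> plane_length Q c"
proof -
  define t where "t i = (if i = 0 then 0 else if i = 1 then u else 1)" for i :: nat
  have t: "partition01 2 t" using u by (simp add: partition01_def t_def)
  have "inscribed_length Q c 2 t = normL Q (c u - c 0) + normL Q (c 1 - c u)"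
    by (simp add: inscribed_length_def t_def numeral_2_eq_2)
  then show ?thesis
    using inscribed_length_le_plane_length[OF c t] normL_nonneg[of "c 1 - c u"] by linarith
qed

lemma plane_length_add_le:
  assumes f: "lipschitz_path f" and g: "lipschitz_path g"
  shows "plane_length Q (\<lambda>u. f u + g u) \<le> plane_length Q f + plane_length Q g"
proof (rule plane_length_le)
  fix n t assume t: "partition01 n t"
  have "inscribed_length Q (\<lambda>u. f u + g u) n t \<le> inscribed_length Q f n t + inscribed_length Q g n t"
    unfolding inscribed_length_def sum.distrib[symmetric]
    by (rule sum_mono) (metis add_diff_add normL_triangle)
  also have "\<dots> \<le> plane_length Q f + plane_length Q g"
    by (intro add_mono inscribed_length_le_plane_length f g t)
  finally show "inscribed_length Q (\<lambda>u. f u + g u) n t \<le> plane_length Q f + plane_length Q g" .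
qed

lemma plane_length_scaleR_le:
  assumes a: "0 \<le> a" and f: "lipschitz_path f"
  shows "plane_length Q (\<lambda>u. a *\<^sub>R f u) \<le> a * plane_length Q f"
proof (rule plane_length_le)
  fix n t assume t: "partition01 n t"
  have "inscribed_length Q (\<lambda>u. a *\<^sub>R f u) n t \<le> a * inscribed_length Q f n t"
    unfolding inscribed_length_def sum_distrib_left
    by (rule sum_mono) (metis a normL_scaleR_le scaleR_diff_right)
  also have "\<dots> \<le> a * plane_length Q f"
    by (intro mult_left_mono inscribed_length_le_plane_length f t a)
  finally show "inscribed_length Q (\<lambda>u. a *\<^sub>R f u) n t \<le> a * plane_length Q f" .
qed

lemma plane_length_segment: "plane_length Q (\<lambda>u. (1 - u) *\<^sub>R p) \<le> normL Q (- p)"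
proof (rule plane_length_le)
  fix n t assume t: "partition01 n t"
  have "inscribed_length Q (\<lambda>u. (1 - u) *\<^sub>R p) n t \<le> (\<Sum>i<n. (t (Suc i) - t i) * normL Q (- p))"
    unfolding inscribed_length_def
  proof (rule sum_mono)
    fix i assume "i \<in> {..<n}"
    then have "0 \<le> t (Suc i) - t i" using t by (simp add: partition01_def)
    moreover have "(1 - t (Suc i)) *\<^sub>R p - (1 - t i) *\<^sub>R p = (t (Suc i) - t i) *\<^sub>R (- p)"
      by (simp add: algebra_simps)
    ultimately show "normL Q ((1 - t (Suc i)) *\<^sub>R p - (1 - t i) *\<^sub>R p) \<le> (t (Suc i) - t i) * normL Q (- p)"
      using normL_scaleR_le[of "t (Suc i) - t i" "- p"] by (simp only:)
  qed
  also have "\<dots> = normL Q (- p)"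
    using partition01_telescope[OF t] by (simp add: sum_distrib_right[symmetric])
  finally show "inscribed_length Q (\<lambda>u. (1 - u) *\<^sub>R p) n t \<le> normL Q (- p)" .
qed

end

section \<open>Surgery on horizontal paths to the origin\<close>

definition horizontal_to_origin :: "real \<times> real \<Rightarrow> real \<Rightarrow> (real \<Rightarrow> real \<times> real) \<Rightarrow> (real \<Rightarrow> real) \<Rightarrow> bool" where
  "horizontal_to_origin p t c z \<longleftrightarrow> horizontal c z \<and> c 0 = p \<and> z 0 = t \<and> c 1 = 0 \<and> z 1 = 0"

lemma horizontal_straight: "horizontal_to_origin p 0 (\<lambda>u. (1 - u) *\<^sub>R p) (\<lambda>u. 0)"
proof -
  have "((\<lambda>u. (1 - u) *\<^sub>R p) has_vector_derivative - p) (at s within {0..1})" for s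
  proof -
    have "((\<lambda>u. 1 - u) has_real_derivative - 1) (at s within {0..1})"
      using DERIV_diff[OF DERIV_const DERIV_ident] by simp
    from has_vector_derivative_scaleR[OF this has_vector_derivative_const] show ?thesis by simp
  qed
  moreover have "wedge ((1 - s) *\<^sub>R p) (- p) = 0" for s by (simp add: wedge_def)
  ultimately have "AE s in lebesgue. s \<in> {0..1} \<longrightarrow> (\<exists>c'.
      ((\<lambda>u. (1 - u) *\<^sub>R p) has_vector_derivative c') (at s within {0..1}) \<and>
      ((\<lambda>u. 0) has_real_derivative wedge ((1 - s) *\<^sub>R p) c' / 2) (at s within {0..1}))"
    by (intro AE_I2 impI exI[of _ "- p"]) simp
  moreover have "lipschitz_path (\<lambda>u. (1 - u) *\<^sub>R p)" by (intro lipschitz_path_intros)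
  ultimately show ?thesis
    by (simp add: horizontal_to_origin_def horizontal_def lipschitz_path_const)
qed

lemma horizontal_contract:
  fixes p :: "real \<times> real" and s :: real and c :: "real \<Rightarrow> real \<times> real"
  defines "F \<equiv> \<lambda>u. integral {0..u} (\<lambda>v. wedge p (c v))"
  assumes hc: "horizontal c z"
  shows "horizontal (\<lambda>u. (1 - s) *\<^sub>R c u + s *\<^sub>R ((1 - u) *\<^sub>R p))
    (\<lambda>u. (1 - s)\<^sup>2 * z u + s * (1 - s) / 2 * ((1 - u) * wedge p (c u) + 2 * (F u - F 1)))"
    (is "horizontal ?c2 ?z2")
proof (rule horizontal_transfer[OF hc])
  \<comment> \<open>The height is forced by the planar path: integrate wedge(c2, c2')/2 using z' = wedge(c, c')/2
    and F' = wedge(p, c).\<close>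
  have lc: "lipschitz_path c" and lz: "lipschitz_path z" using hc by (auto simp: horizontal_def)
  define h where "h v = wedge p (c v)" for v
  have lh: "lipschitz_path h" unfolding h_def by (intro lipschitz_path_intros lc)
  then have "continuous_on {0..1} h" using lipschitz_on_continuous_on by (auto simp: lipschitz_path_def)
  have F_deriv: "(F has_real_derivative h u) (at u within {0..1})" if "u \<in> {0..1}" for u
    unfolding F_def h_def[symmetric] using integral_has_real_derivative[OF \<open>continuous_on {0..1} h\<close> that] .
  show "lipschitz_path ?c2" by (intro lipschitz_path_intros lc)
  show "lipschitz_path ?z2" unfolding F_def h_def[symmetric] by (intro lipschitz_path_intros lz lh)
  fix u c' assume u: "u \<in> {0..1}" and dc: "(c has_vector_derivative c') (at u within {0..1})"
    and dz: "(z has_real_derivative wedge (c u) c' / 2) (at u within {0..1})"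
  have dh: "(h has_real_derivative wedge p c') (at u within {0..1})"
    using wedge_has_vector_derivative[OF has_vector_derivative_const dc, of p]
    by (simp add: h_def[abs_def] wedge_def)
  have "(?c2 has_vector_derivative (1 - s) *\<^sub>R c' - s *\<^sub>R p) (at u within {0..1})"
    by (auto intro!: derivative_eq_intros dc)
  moreover have dz2: "(?z2 has_real_derivative (1 - s)\<^sup>2 * (wedge (c u) c' / 2)
      + s * (1 - s) / 2 * (((1 - u) * wedge p c' + (0 - 1) * h u) + 2 * (h u - 0))) (at u within {0..1})"
    unfolding h_def[symmetric]
    by (intro DERIV_add DERIV_cmult dz DERIV_mult' DERIV_diff DERIV_const DERIV_ident dh F_deriv[OF u])
  have "(1 - s)\<^sup>2 * (wedge (c u) c' / 2)
      + s * (1 - s) / 2 * (((1 - u) * wedge p c' + (0 - 1) * h u) + 2 * (h u - 0))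
      = wedge (?c2 u) ((1 - s) *\<^sub>R c' - s *\<^sub>R p) / 2"
    by (simp add: h_def wedge_def field_simps power2_eq_square)
  with dz2 have "(?z2 has_real_derivative wedge (?c2 u) ((1 - s) *\<^sub>R c' - s *\<^sub>R p) / 2) (at u within {0..1})"
    by (simp only:)
  ultimately show "\<exists>c2'. (?c2 has_vector_derivative c2') (at u within {0..1}) \<and>
      (?z2 has_real_derivative wedge (?c2 u) c2' / 2) (at u within {0..1})" by blast
qed

context gauge_body
begin

lemma normL_le_plane_length:
  assumes "horizontal_to_origin p t c z" shows "normL Q (- p) \<le> plane_length Q c"
  using chord_le_plane_length[of c 1] assms by (simp add: horizontal_to_origin_def horizontal_def)

lemma norm_le_along_horizontal:
  assumes hor: "horizontal_to_origin p t c z" and u: "u \<in> {0..1}"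
  shows "norm (c u) \<le> norm p + R * plane_length Q c"
proof -
  have "norm (c u - p) \<le> R * normL Q (c u - p)" by (rule norm_le_normL)
  also have "\<dots> \<le> R * plane_length Q c"
    using chord_le_plane_length[OF _ u, of c] hor R_pos
    by (intro mult_left_mono) (auto simp: horizontal_to_origin_def horizontal_def)
  finally show ?thesis using norm_triangle_sub[of "c u" p] by linarith
qed

lemma contract_to_segment:
  assumes hor: "horizontal_to_origin p t c z" and s: "0 \<le> s" "s \<le> 1"
  shows "\<exists>c2 z2. horizontal_to_origin p ((1 - s)\<^sup>2 * t - s * (1 - s) * integral {0..1} (\<lambda>v. wedge p (c v))) c2 z2
    \<and> plane_length Q c2 \<le> (1 - s) * plane_length Q c + s * normL Q (- p)"
proof -
  have hc: "horizontal c z" and c0: "c 0 = p" and c1: "c 1 = 0" and z0: "z 0 = t" and z1: "z 1 = 0"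
    using hor by (auto simp: horizontal_to_origin_def)
  have lc: "lipschitz_path c" using hc by (auto simp: horizontal_def)
  define F where "F u = integral {0..u} (\<lambda>v. wedge p (c v))" for u
  define c2 where "c2 u = (1 - s) *\<^sub>R c u + s *\<^sub>R ((1 - u) *\<^sub>R p)" for u
  define z2 where "z2 u = (1 - s)\<^sup>2 * z u + s * (1 - s) / 2 * ((1 - u) * wedge p (c u) + 2 * (F u - F 1))" for u
  have "horizontal c2 z2"
    using horizontal_contract[OF hc, of s p] unfolding c2_def[abs_def] z2_def[abs_def] F_def .
  moreover have "z2 0 = (1 - s)\<^sup>2 * t - s * (1 - s) * F 1"
    by (simp add: z2_def z0 F_def c0 wedge_def field_simps)
  moreover have "z2 1 = 0" by (simp add: z2_def z1 c1 wedge_def)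
  ultimately have "horizontal_to_origin p ((1 - s)\<^sup>2 * t - s * (1 - s) * F 1) c2 z2"
    by (simp add: horizontal_to_origin_def c2_def c0 c1)
  moreover have "plane_length Q c2 \<le> (1 - s) * plane_length Q c + s * normL Q (- p)"
  proof -
    have lseg: "lipschitz_path (\<lambda>u. (1 - u) *\<^sub>R p)" by (intro lipschitz_path_intros)
    have "plane_length Q c2
        \<le> plane_length Q (\<lambda>u. (1 - s) *\<^sub>R c u) + plane_length Q (\<lambda>u. s *\<^sub>R ((1 - u) *\<^sub>R p))"
      unfolding c2_def by (intro plane_length_add_le lipschitz_path_intros lc)
    also have "\<dots> \<le> (1 - s) * plane_length Q c + s * plane_length Q (\<lambda>u. (1 - u) *\<^sub>R p)"
      using s by (intro add_mono plane_length_scaleR_le lc lseg) auto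
    also have "\<dots> \<le> (1 - s) * plane_length Q c + s * normL Q (- p)"
      using s plane_length_segment[of p] by (simp add: mult_left_mono)
    finally show ?thesis .
  qed
  ultimately show ?thesis unfolding F_def by blast
qed

lemma lower_height:
  assumes hor: "horizontal_to_origin p t' c z" and t: "0 \<le> t" "t \<le> t'"
  shows "\<exists>c2 z2. horizontal_to_origin p t c2 z2 \<and>
    plane_length Q c2 \<le> plane_length Q c
      - (t' - t) / (2 * t' + norm p * (norm p + R * plane_length Q c)) * (plane_length Q c - normL Q (- p))"
proof -
  define L where "L = plane_length Q c"
  define l0 where "l0 = normL Q (- p)"
  define J where "J = norm p * (norm p + R * L)"
  define A where "A = integral {0..1} (\<lambda>v. wedge p (c v))"
  have l0L: "l0 \<le> L" using normL_le_plane_length[OF hor] by (simp add: l0_def L_def)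
  have J0: "0 \<le> J" using l0L normL_nonneg[of "- p"] R_pos by (simp add: J_def l0_def)
  have "lipschitz_path (\<lambda>v. wedge p (c v))"
    using hor by (intro lipschitz_path_intros) (auto simp: horizontal_to_origin_def horizontal_def)
  then have cont: "continuous_on {0..1} (\<lambda>v. wedge p (c v))"
    using lipschitz_on_continuous_on by (auto simp: lipschitz_path_def)
  have bound: "norm (wedge p (c v)) \<le> J" if "v \<in> {0..1}" for v
  proof -
    have "\<bar>wedge p (c v)\<bar> \<le> norm p * norm (c v)" by (rule abs_wedge_le)
    also have "\<dots> \<le> J" unfolding J_def L_def
      using norm_le_along_horizontal[OF hor that] by (intro mult_left_mono) auto
    finally show ?thesis by simp
  qed
  have A: "\<bar>A\<bar> \<le> J" using integral_bound[OF _ cont bound] by (simp add: A_def)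
  have "continuous_on {0..1} (\<lambda>s. (1 - s)\<^sup>2 * t' - s * (1 - s) * A)" by (intro continuous_intros)
  then obtain s where s: "0 \<le> s" "s \<le> 1" "(1 - s)\<^sup>2 * t' - s * (1 - s) * A = t"
    using IVT2'[of "\<lambda>s. (1 - s)\<^sup>2 * t' - s * (1 - s) * A" 1 t 0] t by auto
  then obtain c2 z2 where hor2: "horizontal_to_origin p t c2 z2" and c2: "plane_length Q c2 \<le> (1 - s) * L + s * l0"
    using contract_to_segment[OF hor s(1,2)] by (auto simp: A_def L_def l0_def)
  \<comment> \<open>A large contraction parameter s is forced by the height drop t' - t.\<close>
  have "t' - t = s * (2 - s) * t' + s * (1 - s) * A" using s(3) by (simp add: algebra_simps power2_eq_square)
  also have "\<dots> \<le> s * (2 * t') + s * J"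
  proof (rule add_mono)
    have "(2 - s) * t' \<le> 2 * t'" using s t by (intro mult_right_mono) auto
    then show "s * (2 - s) * t' \<le> s * (2 * t')" using s by (simp add: mult.assoc mult_left_mono)
    have "s * (1 - s) * A \<le> s * (1 - s) * J" using A s by (intro mult_left_mono) auto
    also have "\<dots> \<le> s * J" using mult_left_le_one_le[of "s * J" "1 - s"] s J0 by (simp add: algebra_simps)
    finally show "s * (1 - s) * A \<le> s * J" .
  qed
  finally have "(t' - t) / (2 * t' + J) \<le> s"
    using s t J0 by (cases "2 * t' + J = 0") (auto simp: divide_le_eq algebra_simps)
  then have "(t' - t) / (2 * t' + J) * (L - l0) \<le> s * (L - l0)" using l0L by (intro mult_right_mono) auto
  then have "plane_length Q c2 \<le> L - (t' - t) / (2 * t' + J) * (L - l0)"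
    using c2 by (simp add: algebra_simps)
  then show ?thesis using hor2 unfolding L_def l0_def J_def by blast
qed

end

text \<open>A closed polynomial loop enclosing signed area bump_area 1 = -1/30.\<close>

definition bump :: "real \<Rightarrow> real \<times> real" where
  "bump u = (u - u\<^sup>2, u ^ 3 - u\<^sup>2)"

definition bump' :: "real \<Rightarrow> real \<times> real" where
  "bump' u = (1 - 2 * u, 3 * u\<^sup>2 - 2 * u)"

definition bump_area :: "real \<Rightarrow> real" where
  "bump_area u = u ^ 4 / 2 - u ^ 3 / 3 - u ^ 5 / 5"

lemma bump_has_vector_derivative: "(bump has_vector_derivative bump' u) (at u within S)"
  unfolding bump_def[abs_def] bump'_def
  by (auto intro!: derivative_eq_intros
      simp: has_real_derivative_iff_has_vector_derivative[symmetric] algebra_simps eval_nat_numeral)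

lemma bump_area_has_real_derivative: "(bump_area has_real_derivative wedge (bump u) (bump' u)) (at u within S)"
proof -
  have "wedge (bump u) (bump' u) = 2 * u ^ 3 - u\<^sup>2 - u ^ 4"
    by (simp add: bump_def bump'_def wedge_def algebra_simps eval_nat_numeral)
  then show ?thesis
    unfolding bump_area_def[abs_def] by (auto intro!: derivative_eq_intros simp: algebra_simps eval_nat_numeral)
qed

lemma bump_endpoints: "bump 0 = 0" "bump 1 = 0"
  by (simp_all add: bump_def zero_prod_def)

lemma bump_area_endpoints: "bump_area 0 = 0" "bump_area 1 = - 1 / 30"
  by (simp_all add: bump_area_def)

lemma lipschitz_bump: "2-lipschitz_on {0..1} bump"
proof (rule lipschitz_on_if_vector_derivative_bounded[OF bump_has_vector_derivative])
  fix u :: real assume u: "u \<in> {0..1}"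
  have "\<bar>1 - 2 * u\<bar> \<le> 1" using u by auto
  moreover have "\<bar>3 * u\<^sup>2 - 2 * u\<bar> \<le> 1"
  proof -
    have "(3 * u + 1) * (u - 1) \<le> 0" using u by (intro mult_nonneg_nonpos) auto
    moreover have "0 \<le> 3 * (u - 1 / 3)\<^sup>2" by simp
    ultimately show ?thesis by (simp add: abs_le_iff power2_eq_square algebra_simps)
  qed
  ultimately show "norm (bump' u) \<le> 2"
    using norm_Pair_le[of "1 - 2 * u" "3 * u\<^sup>2 - 2 * u"] by (simp add: bump'_def)
qed simp

lemma horizontal_add_loop:
  fixes \<sigma> :: real and c :: "real \<Rightarrow> real \<times> real"
  defines "G \<equiv> \<lambda>u. integral {0..u} (\<lambda>v. wedge (c v) (bump' v))"
  assumes hc: "horizontal c z"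
  shows "horizontal (\<lambda>u. c u + \<sigma> *\<^sub>R bump u)
    (\<lambda>u. z u + \<sigma> * (G u - G 1 + wedge (bump u) (c u) / 2) + \<sigma>\<^sup>2 / 2 * (bump_area u - bump_area 1))"
    (is "horizontal ?c2 ?z2")
proof (rule horizontal_transfer[OF hc])
  have lc: "lipschitz_path c" and lz: "lipschitz_path z" using hc by (auto simp: horizontal_def)
  have lb: "lipschitz_path bump" using lipschitz_bump by (rule lipschitz_pathI)
  define g where "g v = wedge (c v) (bump' v)" for v
  have lg: "lipschitz_path g" unfolding g_def bump'_def by (intro lipschitz_path_intros lc)
  then have "continuous_on {0..1} g" using lipschitz_on_continuous_on by (auto simp: lipschitz_path_def)
  have G_deriv: "(G has_real_derivative g u) (at u within {0..1})" if "u \<in> {0..1}" for u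
    unfolding G_def g_def[symmetric] using integral_has_real_derivative[OF \<open>continuous_on {0..1} g\<close> that] .
  show "lipschitz_path ?c2" by (intro lipschitz_path_intros lc lb)
  show "lipschitz_path ?z2"
    unfolding G_def g_def[symmetric] bump_area_def by (intro lipschitz_path_intros lz lg lb lc)
  fix u c' assume u: "u \<in> {0..1}" and dc: "(c has_vector_derivative c') (at u within {0..1})"
    and dz: "(z has_real_derivative wedge (c u) c' / 2) (at u within {0..1})"
  have "(?c2 has_vector_derivative c' + \<sigma> *\<^sub>R bump' u) (at u within {0..1})"
    by (intro has_vector_derivative_add dc bounded_linear.has_vector_derivative[OF bounded_linear_scaleR_right]
        bump_has_vector_derivative)
  moreover have dz2: "(?z2 has_real_derivative wedge (c u) c' / 2
      + \<sigma> * (g u - 0 + (wedge (bump u) c' + wedge (bump' u) (c u)) / 2)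
      + \<sigma>\<^sup>2 / 2 * (wedge (bump u) (bump' u) - 0)) (at u within {0..1})"
    by (intro DERIV_add DERIV_diff DERIV_cmult dz G_deriv[OF u] DERIV_cdivide DERIV_const
        wedge_has_vector_derivative bump_has_vector_derivative dc bump_area_has_real_derivative)
  have "wedge (c u) c' / 2 + \<sigma> * (g u - 0 + (wedge (bump u) c' + wedge (bump' u) (c u)) / 2)
      + \<sigma>\<^sup>2 / 2 * (wedge (bump u) (bump' u) - 0) = wedge (?c2 u) (c' + \<sigma> *\<^sub>R bump' u) / 2"
    by (simp add: g_def wedge_def field_simps power2_eq_square)
  with dz2 have "(?z2 has_real_derivative wedge (?c2 u) (c' + \<sigma> *\<^sub>R bump' u) / 2) (at u within {0..1})"
    by (simp only:)
  ultimately show "\<exists>c2'. (?c2 has_vector_derivative c2') (at u within {0..1}) \<and>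
      (?z2 has_real_derivative wedge (?c2 u) c2' / 2) (at u within {0..1})" by blast
qed

context gauge_body
begin

lemma add_loop:
  assumes hor: "horizontal_to_origin p t c z"
  shows "\<exists>c2 z2. horizontal_to_origin p (t - \<sigma> * integral {0..1} (\<lambda>v. wedge (c v) (bump' v)) + \<sigma>\<^sup>2 / 60) c2 z2
    \<and> plane_length Q c2 \<le> plane_length Q c + \<bar>\<sigma>\<bar> * 2 / \<rho>"
proof -
  have hc: "horizontal c z" and c0: "c 0 = p" and c1: "c 1 = 0" and z0: "z 0 = t" and z1: "z 1 = 0"
    using hor by (auto simp: horizontal_to_origin_def)
  have lc: "lipschitz_path c" using hc by (auto simp: horizontal_def)
  define G where "G u = integral {0..u} (\<lambda>v. wedge (c v) (bump' v))" for u
  define c2 where "c2 u = c u + \<sigma> *\<^sub>R bump u" for u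
  define z2 where "z2 u = z u + \<sigma> * (G u - G 1 + wedge (bump u) (c u) / 2) + \<sigma>\<^sup>2 / 2 * (bump_area u - bump_area 1)"
    for u
  have "horizontal c2 z2"
    using horizontal_add_loop[OF hc, of \<sigma>] unfolding c2_def[abs_def] z2_def[abs_def] G_def .
  moreover have "z2 0 = t - \<sigma> * G 1 + \<sigma>\<^sup>2 / 60"
    by (simp add: z2_def z0 G_def bump_endpoints bump_area_endpoints wedge_def algebra_simps)
  moreover have "z2 1 = 0" by (simp add: z2_def z1 c1 bump_endpoints wedge_def)
  ultimately have "horizontal_to_origin p (t - \<sigma> * G 1 + \<sigma>\<^sup>2 / 60) c2 z2"
    by (simp add: horizontal_to_origin_def c2_def c0 c1 bump_endpoints)
  moreover have "plane_length Q c2 \<le> plane_length Q c + \<bar>\<sigma>\<bar> * 2 / \<rho>"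
  proof -
    have "plane_length Q c2 \<le> plane_length Q c + plane_length Q (\<lambda>u. \<sigma> *\<^sub>R bump u)"
      unfolding c2_def
      by (intro plane_length_add_le lc lipschitz_path_intros lipschitz_pathI[OF lipschitz_bump])
    also have "plane_length Q (\<lambda>u. \<sigma> *\<^sub>R bump u) \<le> \<bar>\<sigma>\<bar> * 2 / \<rho>"
      by (intro plane_length_le_lipschitz lipschitz_on_cmult lipschitz_bump)
    finally show ?thesis by simp
  qed
  ultimately show ?thesis unfolding G_def by blast
qed

lemma raise_height:
  assumes hor: "horizontal_to_origin p t c z" and \<delta>: "0 \<le> \<delta>"
  shows "\<exists>c2 z2. horizontal_to_origin p (t + \<delta>) c2 z2 \<and>
    plane_length Q c2 \<le> plane_length Q c + 2 / \<rho> * sqrt (60 * \<delta>)"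
proof -
  define A where "A = integral {0..1} (\<lambda>v. wedge (c v) (bump' v))"
  \<comment> \<open>The loop is traversed with amplitude r in the direction that makes both terms of the height
    change - \<sigma> A + \<sigma>^2/60 nonnegative.\<close>
  have "continuous_on {0..sqrt (60 * \<delta>)} (\<lambda>r. r * \<bar>A\<bar> + r\<^sup>2 / 60)"
    by (intro continuous_intros) auto
  moreover have "\<delta> \<le> sqrt (60 * \<delta>) * \<bar>A\<bar> + (sqrt (60 * \<delta>))\<^sup>2 / 60" using \<delta> by simp
  ultimately obtain r where r: "0 \<le> r" "r \<le> sqrt (60 * \<delta>)" "r * \<bar>A\<bar> + r\<^sup>2 / 60 = \<delta>"
    using IVT'[of "\<lambda>r. r * \<bar>A\<bar> + r\<^sup>2 / 60" 0 \<delta> "sqrt (60 * \<delta>)"] \<delta> by auto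
  define \<sigma> where "\<sigma> = (if 0 \<le> A then - r else r)"
  have height: "t - \<sigma> * A + \<sigma>\<^sup>2 / 60 = t + \<delta>" and len: "\<bar>\<sigma>\<bar> * 2 / \<rho> \<le> 2 / \<rho> * sqrt (60 * \<delta>)"
    using r radius_pos by (auto simp: \<sigma>_def divide_right_mono)
  obtain c2 z2 where "horizontal_to_origin p (t + \<delta>) c2 z2"
    and "plane_length Q c2 \<le> plane_length Q c + \<bar>\<sigma>\<bar> * 2 / \<rho>"
    using add_loop[OF hor, of \<sigma>] unfolding A_def[symmetric] height by blast
  with len show ?thesis by (intro exI[of _ c2] exI[of _ z2]) auto
qed

end

lemma height_increment_le:
  assumes hor: "horizontal c z" and B: "B-lipschitz_on {0..1} c" and ab: "0 \<le> a" "a \<le> b" "b \<le> 1"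
  shows "\<bar>z b - z a - wedge (c a) (c b) / 2\<bar> \<le> B * B * (b - a)\<^sup>2 / 2"
proof -
  obtain N where N: "negligible N"
    and der: "\<And>s. s \<in> {0..1} \<Longrightarrow> s \<notin> N \<Longrightarrow> \<exists>c'. (c has_vector_derivative c') (at s within {0..1}) \<and>
           (z has_real_derivative wedge (c s) c' / 2) (at s within {0..1})"
    using horizontal_negligibleE[OF hor] by blast
  define g where "g u = z u - wedge (c a) (c u) / 2" for u
  have "lipschitz_path g"
    using hor unfolding g_def horizontal_def by (intro lipschitz_path_intros) auto
  then obtain K where "K-lipschitz_on {0..1} g" by (auto simp: lipschitz_path_def)
  then have K: "K-lipschitz_on {a..b} g" by (rule lipschitz_on_subset) (use ab in auto)
  have "\<bar>g b - g a\<bar> \<le> B * B * (b - a) / 2 * (b - a)"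
  proof (rule lipschitz_abs_diff_le_ae_deriv[OF ab(2) K N])
    fix u assume u: "u \<in> {a..b}" "u \<notin> N"
    have u01: "u \<in> {0..1}" using u ab by auto
    obtain c' where dc: "(c has_vector_derivative c') (at u within {0..1})"
      and dz: "(z has_real_derivative wedge (c u) c' / 2) (at u within {0..1})"
      using der[OF u01 u(2)] by blast
    have "(g has_real_derivative wedge (c u) c' / 2 - (wedge (c a) c' + wedge 0 (c u)) / 2) (at u within {0..1})"
      unfolding g_def
      by (intro DERIV_diff dz DERIV_cdivide wedge_has_vector_derivative has_vector_derivative_const dc)
    moreover have "wedge (c u) c' / 2 - (wedge (c a) c' + wedge 0 (c u)) / 2 = wedge (c u - c a) c' / 2"
      by (simp add: wedge_def field_simps)
    ultimately have "(g has_real_derivative wedge (c u - c a) c' / 2) (at u within {a..b})"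
      using ab by (auto intro: DERIV_subset)
    moreover have "\<bar>wedge (c u - c a) c' / 2\<bar> \<le> B * B * (b - a) / 2"
    proof -
      have "norm (c u - c a) \<le> B * (u - a)"
        using lipschitz_on_normD[OF B u01, of a] ab u by auto
      also have "\<dots> \<le> B * (b - a)"
        using u lipschitz_on_nonneg[OF B] by (intro mult_left_mono) auto
      finally have "norm (c u - c a) \<le> B * (b - a)" .
      moreover have "norm c' \<le> B"
        using vector_derivative_norm_le_lipschitz[OF dc B u01] u01 by (simp add: trivial_limit_within)
      ultimately have "norm (c u - c a) * norm c' \<le> B * (b - a) * B"
        using lipschitz_on_nonneg[OF B] ab by (intro mult_mono) auto
      then show ?thesis using abs_wedge_le[of "c u - c a" c'] by (simp add: algebra_simps)
    qed
    ultimately show "\<exists>D. (g has_real_derivative D) (at u within {a..b}) \<and> \<bar>D\<bar> \<le> B * B * (b - a) / 2"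
      by blast
  qed
  then show ?thesis by (simp add: g_def wedge_def power2_eq_square algebra_simps)
qed

context gauge_body
begin

lemma sum_abs_wedge_le:
  assumes hor: "horizontal_to_origin p t c z" and tt: "partition01 n tt"
  shows "(\<Sum>i<n. \<bar>wedge (c (tt i)) (c (tt (Suc i)))\<bar>) \<le> (norm p + R * plane_length Q c) * (R * plane_length Q c)"
proof -
  define M where "M = norm p + R * plane_length Q c"
  have M0: "0 \<le> M"
    using R_pos normL_le_plane_length[OF hor] normL_nonneg[of "- p"] by (simp add: M_def)
  have "(\<Sum>i<n. \<bar>wedge (c (tt i)) (c (tt (Suc i)))\<bar>) \<le> (\<Sum>i<n. M * (R * normL Q (c (tt (Suc i)) - c (tt i))))"
  proof (rule sum_mono)
    fix i assume "i \<in> {..<n}"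
    then have "tt i \<in> {0..1}" using partition01_range[OF tt] by simp
    have "wedge (c (tt i)) (c (tt (Suc i))) = wedge (c (tt i)) (c (tt (Suc i)) - c (tt i))"
      by (simp add: wedge_def algebra_simps)
    then have "\<bar>wedge (c (tt i)) (c (tt (Suc i)))\<bar> \<le> norm (c (tt i)) * norm (c (tt (Suc i)) - c (tt i))"
      using abs_wedge_le by simp
    also have "\<dots> \<le> M * (R * normL Q (c (tt (Suc i)) - c (tt i)))"
      using norm_le_along_horizontal[OF hor \<open>tt i \<in> {0..1}\<close>] M0
      by (intro mult_mono norm_le_normL) (auto simp: M_def)
    finally show "\<bar>wedge (c (tt i)) (c (tt (Suc i)))\<bar> \<le> M * (R * normL Q (c (tt (Suc i)) - c (tt i)))" .
  qed
  also have "\<dots> = M * R * inscribed_length Q c n tt"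
    by (simp add: inscribed_length_def sum_distrib_left mult.assoc)
  also have "\<dots> \<le> M * R * plane_length Q c"
    using inscribed_length_le_plane_length[OF _ tt, of c] hor M0 R_pos
    by (intro mult_left_mono) (auto simp: horizontal_to_origin_def horizontal_def)
  finally show ?thesis by (simp add: M_def mult.assoc)
qed

lemma height_le_riemann:
  fixes n :: nat
  assumes hor: "horizontal_to_origin p t c z" and B: "B-lipschitz_on {0..1} c" and n: "0 < n"
  shows "t \<le> (norm p + R * plane_length Q c) * (R * plane_length Q c) / 2 + B * B / (2 * n)"
proof -
  define tt where "tt i = real i / real n" for i
  have tt: "partition01 n tt" using n by (simp add: partition01_def tt_def divide_right_mono)
  define \<zeta> where "\<zeta> i = z (tt (Suc i)) - z (tt i) - wedge (c (tt i)) (c (tt (Suc i))) / 2" for i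
  have "(\<Sum>i<n. z (tt (Suc i)) - z (tt i)) = z (tt n) - z (tt 0)" by (rule sum_lessThan_telescope)
  then have "- t = (\<Sum>i<n. z (tt (Suc i)) - z (tt i))"
    using hor n by (simp add: horizontal_to_origin_def tt_def)
  also have "\<dots> = (\<Sum>i<n. \<zeta> i) + (\<Sum>i<n. wedge (c (tt i)) (c (tt (Suc i)))) / 2"
    by (simp add: \<zeta>_def sum.distrib[symmetric] sum_divide_distrib)
  finally have "t \<le> (\<Sum>i<n. \<bar>\<zeta> i\<bar>) + (\<Sum>i<n. \<bar>wedge (c (tt i)) (c (tt (Suc i)))\<bar>) / 2"
    using sum_abs[of \<zeta> "{..<n}"] sum_abs[of "\<lambda>i. wedge (c (tt i)) (c (tt (Suc i)))" "{..<n}"] by linarith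
  also have "(\<Sum>i<n. \<bar>\<zeta> i\<bar>) \<le> (\<Sum>i<n. B * B * (1 / n)\<^sup>2 / 2)"
  proof (rule sum_mono)
    fix i assume "i \<in> {..<n}"
    moreover have "tt (Suc i) - tt i = 1 / n" by (simp add: tt_def add_divide_distrib)
    ultimately show "\<bar>\<zeta> i\<bar> \<le> B * B * (1 / n)\<^sup>2 / 2"
      using height_increment_le[of c z B "tt i" "tt (Suc i)"] hor B partition01_range[OF tt, of i]
        partition01_range[OF tt, of "Suc i"] tt
      by (auto simp: \<zeta>_def horizontal_to_origin_def partition01_def)
  qed
  also have "(\<Sum>i<n. B * B * (1 / n)\<^sup>2 / 2) = B * B / (2 * n)"
    using n by (simp add: power2_eq_square field_simps)
  finally show ?thesis using sum_abs_wedge_le[OF hor tt] by simp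
qed

lemma height_le:
  assumes hor: "horizontal_to_origin p t c z"
  shows "t \<le> (norm p + R * plane_length Q c) * (R * plane_length Q c) / 2"
proof (rule field_le_epsilon)
  fix e :: real assume e: "0 < e"
  obtain B where B: "B-lipschitz_on {0..1} c"
    using hor by (auto simp: horizontal_to_origin_def horizontal_def lipschitz_path_def)
  obtain n :: nat where n: "B * B / (2 * e) < n" using reals_Archimedean2 by blast
  have "0 \<le> B * B / (2 * e)" using e by simp
  then have n0: "0 < n" using n by linarith
  have "B * B / (2 * n) \<le> e" using n e n0 by (simp add: field_simps)
  then show "t \<le> (norm p + R * plane_length Q c) * (R * plane_length Q c) / 2 + e"
    using height_le_riemann[OF hor B n0] by linarith
qed

end

section \<open>The distance to the origin as a function of the height\<close>

definition dist_to_origin :: "(real \<times> real) set \<Rightarrow> real \<times> real \<Rightarrow> real \<Rightarrow> real" where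
  "dist_to_origin Q p t = Inf {plane_length Q c | c z. horizontal_to_origin p t c z}"

lemma dCC_eq_dist_to_origin: "dCC Q (x, y, t) (0, 0, 0) = dist_to_origin Q (x, y) t"
proof -
  have "{lengthL Q \<gamma> | \<gamma>. admissible \<gamma> \<and> \<gamma> 0 = (x, y, t) \<and> \<gamma> 1 = (0, 0, 0)}
      = {plane_length Q c | c z. horizontal_to_origin (x, y) t c z}" (is "?A = ?B")
  proof
    show "?A \<subseteq> ?B"
    proof clarify
      fix \<gamma> assume adm: "admissible \<gamma>" and ends: "\<gamma> 0 = (x, y, t)" "\<gamma> 1 = (0, 0, 0)"
      define c where "c u = proj_xy (\<gamma> u)" for u
      define z where "z u = snd (snd (\<gamma> u))" for u
      have \<gamma>: "heis_curve c z = \<gamma>" unfolding c_def z_def by (rule heis_curve_proj)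
      have "horizontal_to_origin (x, y) t c z"
        using adm ends unfolding horizontal_to_origin_def admissible_heis_curve[symmetric] \<gamma>
        by (simp add: c_def z_def proj_xy_def zero_prod_def)
      moreover have "lengthL Q \<gamma> = plane_length Q c"
        unfolding \<gamma>[symmetric] by (rule lengthL_heis_curve)
      ultimately show "\<exists>c z. lengthL Q \<gamma> = plane_length Q c \<and> horizontal_to_origin (x, y) t c z" by blast
    qed
    show "?B \<subseteq> ?A"
    proof clarify
      fix c z assume "horizontal_to_origin (x, y) t c z"
      then have "admissible (heis_curve c z) \<and> heis_curve c z 0 = (x, y, t) \<and> heis_curve c z 1 = (0, 0, 0)"
        by (simp add: admissible_heis_curve horizontal_to_origin_def heis_curve_def)
      then show "\<exists>\<gamma>. plane_length Q c = lengthL Q \<gamma> \<and> admissible \<gamma> \<and> \<gamma> 0 = (x, y, t) \<and> \<gamma> 1 = (0, 0, 0)"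
        using lengthL_heis_curve[of Q c z] by (intro exI[of _ "heis_curve c z"]) simp
    qed
  qed
  then show ?thesis by (simp add: dCC_def dist_to_origin_def)
qed

context gauge_body
begin

lemma horizontal_to_origin_exists:
  assumes "0 \<le> t" shows "\<exists>c z. horizontal_to_origin p t c z"
  using raise_height[OF horizontal_straight assms, of p] by auto

lemma horizontal_lengths_nonempty: "0 \<le> t \<Longrightarrow> {plane_length Q c | c z. horizontal_to_origin p t c z} \<noteq> {}"
  using horizontal_to_origin_exists by blast

lemma bdd_below_horizontal_lengths: "bdd_below {plane_length Q c | c z. horizontal_to_origin p t c z}"
proof (rule bdd_belowI)
  fix l assume "l \<in> {plane_length Q c | c z. horizontal_to_origin p t c z}"
  then show "normL Q (- p) \<le> l" using normL_le_plane_length by blast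
qed

lemma dist_to_origin_le: "horizontal_to_origin p t c z \<Longrightarrow> dist_to_origin Q p t \<le> plane_length Q c"
  unfolding dist_to_origin_def by (rule cInf_lower[OF _ bdd_below_horizontal_lengths]) blast

lemma dist_to_origin_ge:
  assumes "0 \<le> t" shows "normL Q (- p) \<le> dist_to_origin Q p t"
  unfolding dist_to_origin_def
proof (rule cInf_greatest[OF horizontal_lengths_nonempty[OF assms]])
  fix l assume "l \<in> {plane_length Q c | c z. horizontal_to_origin p t c z}"
  then show "normL Q (- p) \<le> l" using normL_le_plane_length by blast
qed

lemma dist_to_origin_approx:
  assumes "0 \<le> t" "0 < e"
  obtains c z where "horizontal_to_origin p t c z" "plane_length Q c < dist_to_origin Q p t + e"
proof -
  obtain l where "l \<in> {plane_length Q c | c z. horizontal_to_origin p t c z}" "l < dist_to_origin Q p t + e"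
    using cInf_lessD[OF horizontal_lengths_nonempty[OF assms(1), of p]] assms(2)
    unfolding dist_to_origin_def by (meson less_add_same_cancel1)
  then show ?thesis using that by blast
qed

lemma dist_to_origin_zero: "dist_to_origin Q p 0 = normL Q (- p)"
  using dist_to_origin_le[OF horizontal_straight, of p] plane_length_segment[of p] dist_to_origin_ge[of 0 p]
  by linarith

lemma dist_to_origin_raise:
  assumes "0 \<le> t" "0 \<le> \<delta>"
  shows "dist_to_origin Q p (t + \<delta>) \<le> dist_to_origin Q p t + 2 / \<rho> * sqrt (60 * \<delta>)"
proof (rule field_le_epsilon)
  fix e :: real assume "0 < e"
  then obtain c z where hor: "horizontal_to_origin p t c z" and c: "plane_length Q c < dist_to_origin Q p t + e"
    using dist_to_origin_approx assms(1) by blast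
  obtain c2 z2 where "horizontal_to_origin p (t + \<delta>) c2 z2"
    "plane_length Q c2 \<le> plane_length Q c + 2 / \<rho> * sqrt (60 * \<delta>)"
    using raise_height[OF hor assms(2)] by blast
  then show "dist_to_origin Q p (t + \<delta>) \<le> dist_to_origin Q p t + 2 / \<rho> * sqrt (60 * \<delta>) + e"
    using dist_to_origin_le[of p "t + \<delta>" c2 z2] c by linarith
qed

lemma dist_to_origin_le_convex_combination:
  assumes t: "0 \<le> t" "t < t'"
  shows "\<exists>k>0. dist_to_origin Q p t \<le> (1 - k) * dist_to_origin Q p t' + k * normL Q (- p)"
proof -
  define d where "d = dist_to_origin Q p t'"
  define l0 where "l0 = normL Q (- p)"
  \<comment> \<open>A uniform lower bound for the contraction factor of lower_height along near-minimal paths.\<close>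
  define k where "k = (t' - t) / (2 * t' + norm p * (norm p + R * (d + 1)))"
  have l0d: "l0 \<le> d" using dist_to_origin_ge t by (simp add: l0_def d_def)
  have l0: "0 \<le> l0" by (simp add: l0_def normL_nonneg)
  have "0 \<le> norm p * (norm p + R * (d + 1))" using l0d l0 R_pos by simp
  then have k: "0 < k" "k \<le> 1"
    using t by (auto simp: k_def divide_le_eq intro!: divide_pos_pos add_pos_nonneg)
  have "dist_to_origin Q p t \<le> (1 - k) * d + k * l0"
  proof (rule field_le_epsilon)
    fix e :: real assume "0 < e"
    obtain c z where hor: "horizontal_to_origin p t' c z" and c: "plane_length Q c < d + min e 1"
      using dist_to_origin_approx[of t' "min e 1" p] t \<open>0 < e\<close> by (auto simp: d_def)
    define L where "L = plane_length Q c"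
    define kL where "kL = (t' - t) / (2 * t' + norm p * (norm p + R * L))"
    obtain c2 z2 where hor2: "horizontal_to_origin p t c2 z2" and c2: "plane_length Q c2 \<le> L - kL * (L - l0)"
      using lower_height[OF hor t(1) less_imp_le[OF t(2)]] unfolding L_def kL_def l0_def by blast
    have l0L: "l0 \<le> L" using normL_le_plane_length[OF hor] by (simp add: l0_def L_def)
    have "k \<le> kL"
      unfolding k_def kL_def using t c l0 l0L R_pos
      by (intro divide_left_mono add_left_mono mult_left_mono mult_pos_pos add_pos_nonneg) (auto simp: L_def)
    then have "dist_to_origin Q p t \<le> L - k * (L - l0)"
      using mult_right_mono[of k kL "L - l0"] l0L dist_to_origin_le[OF hor2] c2 by linarith
    also have "\<dots> = (1 - k) * L + k * l0" by (simp add: algebra_simps)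
    also have "\<dots> \<le> (1 - k) * (d + e) + k * l0"
      using c k by (intro add_right_mono mult_left_mono) (auto simp: L_def)
    also have "\<dots> \<le> (1 - k) * d + k * l0 + e"
      using k \<open>0 < e\<close> by (simp add: algebra_simps mult_left_le_one_le)
    finally show "dist_to_origin Q p t \<le> (1 - k) * d + k * l0 + e" .
  qed
  then show ?thesis using k by (auto simp: d_def l0_def)
qed

lemma dist_to_origin_mono:
  assumes "0 \<le> t" "t \<le> t'" shows "dist_to_origin Q p t \<le> dist_to_origin Q p t'"
proof (cases "t = t'")
  case False
  then obtain k where k: "0 < k" "dist_to_origin Q p t \<le> (1 - k) * dist_to_origin Q p t' + k * normL Q (- p)"
    using dist_to_origin_le_convex_combination[of t t' p] assms by auto
  have "normL Q (- p) \<le> dist_to_origin Q p t'" using dist_to_origin_ge assms by simp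
  from mult_left_mono[OF this less_imp_le[OF k(1)]] k(2) show ?thesis by (simp add: algebra_simps)
qed simp

lemma dist_to_origin_strict_mono:
  assumes "0 \<le> t" "t < t'" "normL Q (- p) < dist_to_origin Q p t'"
  shows "dist_to_origin Q p t < dist_to_origin Q p t'"
proof -
  obtain k where k: "0 < k" "dist_to_origin Q p t \<le> (1 - k) * dist_to_origin Q p t' + k * normL Q (- p)"
    using dist_to_origin_le_convex_combination[OF assms(1,2), of p] by blast
  from mult_strict_left_mono[OF assms(3) k(1)] k(2) show ?thesis by (simp add: algebra_simps)
qed

lemma dist_to_origin_unbounded:
  assumes t: "(norm p + R * (normL Q (- p) + 1)) * (R * (normL Q (- p) + 1)) / 2 < t"
  shows "normL Q (- p) < dist_to_origin Q p t"
proof -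
  define l0 where "l0 = normL Q (- p)"
  have l0: "0 \<le> l0" by (simp add: l0_def normL_nonneg)
  then have "0 \<le> (norm p + R * (l0 + 1)) * (R * (l0 + 1)) / 2" using R_pos by simp
  then have "0 \<le> t" using t by (simp add: l0_def)
  have "l0 + 1 \<le> dist_to_origin Q p t"
    unfolding dist_to_origin_def
  proof (rule cInf_greatest[OF horizontal_lengths_nonempty[OF \<open>0 \<le> t\<close>]])
    fix l assume "l \<in> {plane_length Q c | c z. horizontal_to_origin p t c z}"
    then obtain c z where hor: "horizontal_to_origin p t c z" and l: "l = plane_length Q c" by blast
    show "l0 + 1 \<le> l"
    proof (rule ccontr)
      assume "\<not> l0 + 1 \<le> l"
      moreover have "l0 \<le> l" using normL_le_plane_length[OF hor] by (simp add: l0_def l)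
      ultimately have "(norm p + R * l) * (R * l) / 2 \<le> (norm p + R * (l0 + 1)) * (R * (l0 + 1)) / 2"
        using l0 R_pos by (intro divide_right_mono mult_mono add_left_mono mult_left_mono) auto
      then show False using height_le[OF hor] t by (simp add: l l0_def)
    qed
  qed
  then show ?thesis by (simp add: l0_def)
qed

lemma dist_to_origin_holder:
  assumes "0 \<le> a" "0 \<le> b"
  shows "dist (dist_to_origin Q p a) (dist_to_origin Q p b) \<le> 2 / \<rho> * sqrt 60 * sqrt (dist a b)"
proof -
  have *: "\<bar>dist_to_origin Q p t' - dist_to_origin Q p t\<bar> \<le> 2 / \<rho> * sqrt 60 * sqrt (t' - t)"
    if "0 \<le> t" "t \<le> t'" for t t'
  proof -
    have "dist_to_origin Q p (t + (t' - t)) \<le> dist_to_origin Q p t + 2 / \<rho> * sqrt (60 * (t' - t))"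
      using that by (intro dist_to_origin_raise) auto
    then have "dist_to_origin Q p t' \<le> dist_to_origin Q p t + 2 / \<rho> * sqrt 60 * sqrt (t' - t)"
      by (simp only: real_sqrt_mult mult.assoc) simp
    then show ?thesis using dist_to_origin_mono[OF that, of p] by linarith
  qed
  show ?thesis
    using *[of a b] *[of b a] assms by (cases "a \<le> b") (auto simp: dist_real_def abs_minus_commute)
qed

lemma dist_to_origin_shape:
  "continuous_on {0..} (dist_to_origin Q p) \<and>
   (\<exists>T\<ge>0. (\<forall>t\<in>{0..T}. dist_to_origin Q p t = dist_to_origin Q p T) \<and>
      strict_mono_on {T..} (dist_to_origin Q p))"
proof -
  define f where "f = dist_to_origin Q p"
  define l0 where "l0 = normL Q (- p)"
  have cont: "continuous_on {0..} f"
    unfolding f_def by (rule continuous_on_if_holder[OF dist_to_origin_holder]) auto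
  define S where "S = {t \<in> {0..}. f t = l0}"
  have "closed S" unfolding S_def by (intro continuous_closed_preimage_constant cont) auto
  moreover have "0 \<in> S" by (simp add: S_def f_def l0_def dist_to_origin_zero)
  moreover have "bdd_above S"
  proof (rule bdd_aboveI)
    fix t assume "t \<in> S"
    then show "t \<le> (norm p + R * (l0 + 1)) * (R * (l0 + 1)) / 2"
      using dist_to_origin_unbounded[of p t] by (force simp: S_def f_def l0_def)
  qed
  ultimately have T: "Sup S \<in> S" by (intro closed_contains_Sup) auto
  define T where "T = Sup S"
  have fT: "f T = l0" and T0: "0 \<le> T" using T by (auto simp: S_def T_def)
  have ge: "l0 \<le> f t" if "0 \<le> t" for t using dist_to_origin_ge[OF that] by (simp add: f_def l0_def)
  have "f t = f T" if "t \<in> {0..T}" for t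
    using that dist_to_origin_mono[of t T p] ge[of t] fT by (auto simp: f_def)
  moreover have "strict_mono_on {T..} f"
  proof (rule strict_mono_onI)
    fix a b assume a: "a \<in> {T..}" and "b \<in> {T..}" "a < b"
    then have "b \<notin> S" using cSup_upper[OF _ \<open>bdd_above S\<close>, of b] by (auto simp: T_def)
    then have "l0 < f b" using ge[of b] T0 \<open>a < b\<close> a by (auto simp: S_def)
    then show "f a < f b"
      using dist_to_origin_strict_mono[of a b p] a T0 \<open>a < b\<close> by (simp add: f_def l0_def)
  qed
  ultimately show ?thesis using cont T0 unfolding f_def by blast
qed

end

theorem mainTheorem17:
  fixes Q :: "(real \<times> real) set" and x y :: real
  assumes "polytope Q" and "compact Q" and "convex Q"
    and "\<And>v. v \<in> Q \<Longrightarrow> - v \<in> Q"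
    and "interior Q \<noteq> {}"
  shows "continuous_on {0..} (\<lambda>t. dCC Q (x, y, t) (0, 0, 0)) \<and>
         (\<exists>T \<ge> 0. (\<forall>t\<in>{0..T}. dCC Q (x, y, t) (0, 0, 0) = dCC Q (x, y, T) (0, 0, 0)) \<and>
                  strict_mono_on {T..} (\<lambda>t. dCC Q (x, y, t) (0, 0, 0)))"
proof -
  obtain \<rho> where "0 < \<rho>" "cball 0 \<rho> \<subseteq> Q"
    by (rule cball_subset_if_symmetric_convex[OF assms(3-5)])
  moreover obtain R where "Q \<subseteq> ball 0 R"
    using bounded_subset_ballD[OF compact_imp_bounded[OF assms(2)]] by blast
  ultimately interpret gauge_body Q \<rho> R
    using assms(3) ball_subset_cball by unfold_locales blast+
  show ?thesis
    unfolding dCC_eq_dist_to_origin using dist_to_origin_shape[of "(x, y)"] by simp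
qed

end
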